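(* Let $0<\rho_1<1$. There is $\epsilon_0\in(0,1)$ such that for every $0<\epsilon<\epsilon_0$ there is $q_0$ such that the following holds for every prime $q\ge q_0$. Let $S\subseteq\mathbb{Z}/q\mathbb{Z}$ with $|S|\ge\rho_1 q$, and let $h$ be an integer with $1\le h\le q-1$ such that $S'=\{hs\bmod q : s\in S\}$ satisfies: for every integer $a$ with $|a|\le q/2$ and $|f_{S'}(a/q)|>\epsilon|S|$ one has $|a|<q^{1-\rho_1\epsilon^2}$. Let $k$ be an integer and $v$ an integer with $1\le v<q^{\rho_1\epsilon^2/4}$, and let $W=W(k,v)$. Then for every real $u$ with $$5vq^{-\rho_1\epsilon^2}\le |u|\le \tfrac12$$ we have $|f_W(u)|<2\pi\left(\frac{\epsilon}{\rho_1}\right)^{1/3}|S|$.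
   Context: $e(u)=\exp(2\pi i u)$. For a finite set of integers $T$ (subsets of $\mathbb{Z}/q\mathbb{Z}$ being identified with their least nonnegative residues in $\{0,\dots,q-1\}$), $f_T(t)=\sum_{s\in T}e(st)$. Given $S,h$ as in the claim, an integer $k$ and an integer $v$ with $1\le v<q^{\rho_1\epsilon^2/4}$, $W(k,v)\subseteq\{0,1,\dots,q-1\}$ is the set of least nonnegative residues modulo $q$ of the numbers $(4v)^{-1}hs+k$, $s\in S$, where $(4v)^{-1}$ denotes the inverse of $4v$ modulo $q$. *)

theory Defs
  imports "HOL-Analysis.Analysis" "HOL-Number_Theory.Number_Theory"
begin

definition e :: "real \<Rightarrow> complex" where
  "e u = exp (2 * pi * \<i> * complex_of_real u)"

definition fT :: "int set \<Rightarrow> real \<Rightarrow> complex" where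
  "fT T t = (\<Sum>s\<in>T. e (real_of_int s * t))"

definition inv_modq :: "int \<Rightarrow> int \<Rightarrow> int" where
  "inv_modq q a = (SOME x. 0 \<le> x \<and> x < q \<and> [a * x = 1] (mod q))"

definition W :: "int \<Rightarrow> int set \<Rightarrow> int \<Rightarrow> int \<Rightarrow> int \<Rightarrow> int set" where
  "W q S h k v = (\<lambda>s. (inv_modq q (4 * v) * h * s + k) mod q) ` S"

end

theory Submission
  imports Defs
begin

text \<open>
  Finite Fourier inversion writes \<open>fT W u\<close> as \<open>1/q\<close> times the sum of
  \<open>fT W (b/q) * dirichlet_kernel q (u - b/q)\<close> over a window of \<open>q\<close> consecutive integers \<open>b\<close>
  centred at \<open>q u\<close>. Up to a unimodular factor, \<open>fT W (b/q) = fT S' (a/q)\<close> whenever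
  \<open>b \<equiv> 4 v a (mod q)\<close>, so a coefficient larger than \<open>\<epsilon> |S|\<close> forces \<open>|a| < q\<^sup>1\<^sup>-\<^sup>\<delta>\<close>
  with \<open>\<delta> = \<rho>\<^sub>1 \<epsilon>\<^sup>2\<close>. Then \<open>b/q\<close> lies within \<open>4 v q\<^sup>-\<^sup>\<delta>\<close> of an integer, hence at distance at
  least \<open>q\<^sup>-\<^sup>\<delta>\<close> from \<open>u\<close>, where the kernel is at most \<open>q\<^sup>\<delta>/2\<close>. Small coefficients are paired
  with the trivial bound \<open>q\<close> for the \<open>O(1/(\<rho>\<^sub>1 t\<^sup>2))\<close> values of \<open>b\<close> nearest to \<open>q u\<close>, and
  further away with the bound \<open>q/|b - q u|\<close> via AM-GM and Parseval. For \<open>t = (\<epsilon>/\<rho>\<^sub>1)\<^sup>1\<^sup>/\<^sup>3\<close>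
  all contributions add up to at most \<open>21/4 \<cdot> t |S| < 2\<pi> t |S|\<close>.
\<close>

section \<open>The exponential \<open>e\<close> and the Dirichlet kernel\<close>

lemma e_add: "e (x + y) = e x * e y"
  unfolding e_def by (simp add: distrib_left exp_add)

lemma e_of_int: "e (of_int n) = 1"
  using exp_integer_2pi[of "of_int n"] unfolding e_def by (simp add: mult_ac)

lemma e_add_of_int: "e (x + of_int n) = e x"
  by (simp add: e_add e_of_int)

lemma norm_e [simp]: "cmod (e x) = 1"
  unfolding e_def by (simp add: mult_ac norm_exp_i_times)

lemma cnj_e: "cnj (e x) = e (- x)"
  unfolding e_def by (simp add: exp_cnj)

lemma e_of_nat_mult: "e (of_nat n * x) = e x ^ n"
  unfolding e_def by (simp add: mult_ac flip: exp_of_nat_mult)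

lemma e_eq_1_iff: "e x = 1 \<longleftrightarrow> x \<in> \<int>"
proof -
  have "e x = 1 \<longleftrightarrow> (\<exists>n::int. 2 * pi * x = of_int (2 * n) * pi)"
    unfolding e_def exp_eq_1 by simp
  also have "\<dots> \<longleftrightarrow> x \<in> \<int>"
    by (auto elim: Ints_cases)
  finally show ?thesis .
qed

lemma e_cong:
  assumes "0 < q" "[x = y] (mod int q)"
  shows "e (of_int x / real q) = e (of_int y / real q)"
proof -
  obtain n where "x = y + int q * n"
    using assms(2) by (metis cong_iff_lin cong_sym)
  then have "of_int x / real q = of_int y / real q + of_int n"
    using assms(1) by (simp add: field_simps)
  then show ?thesis
    by (simp add: e_add_of_int)
qed

lemma Jordan_inequality:
  fixes x :: real
  assumes "0 \<le> x" "x \<le> pi / 2"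
  shows "2 * x / pi \<le> sin x"
proof -
  have "concave_on {0..pi/2} sin"
    by (rule f''_le0_imp_concave[where f' = cos and f'' = "\<lambda>x. - sin x"])
       (auto intro!: derivative_eq_intros sin_ge_zero)
  moreover have "0 \<le> 2 * x / pi" "2 * x / pi \<le> 1"
    using assms by (auto simp: field_simps)
  ultimately have "(1 - 2 * x / pi) * sin 0 + 2 * x / pi * sin (pi / 2)
      \<le> sin ((1 - 2 * x / pi) *\<^sub>R 0 + (2 * x / pi) *\<^sub>R (pi / 2))"
    by (intro concave_onD) auto
  then show ?thesis
    by simp
qed

lemma norm_e_minus_1_ge:
  assumes "\<bar>x\<bar> \<le> 1 / 2"
  shows "4 * \<bar>x\<bar> \<le> cmod (e x - 1)"
proof -
  have "cmod (e x - 1) = 2 * \<bar>sin (pi * x)\<bar>"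
    using dist_exp_i_1[of "2 * pi * x"] unfolding e_def by (simp add: mult_ac)
  moreover have "\<bar>sin (pi * x)\<bar> = sin (pi * \<bar>x\<bar>)"
  proof -
    have "0 \<le> sin (pi * \<bar>x\<bar>)"
      using assms by (intro sin_ge_zero) auto
    then show ?thesis
      by (cases "0 \<le> x") auto
  qed
  moreover have "2 * (pi * \<bar>x\<bar>) / pi \<le> sin (pi * \<bar>x\<bar>)"
    using assms by (intro Jordan_inequality) auto
  ultimately show ?thesis
    by simp
qed

definition dirichlet_kernel :: "nat \<Rightarrow> real \<Rightarrow> complex" where
  "dirichlet_kernel N x = (\<Sum>n<N. e (real n * x))"

lemma norm_dirichlet_kernel_le: "cmod (dirichlet_kernel N x) \<le> N"
  unfolding dirichlet_kernel_def using norm_sum[of "\<lambda>n. e (real n * x)" "{..<N}"] by simp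

lemma norm_dirichlet_kernel_le_inverse:
  assumes "0 < \<eta>" "\<eta> \<le> \<bar>x\<bar>" "\<bar>x\<bar> \<le> 1 / 2"
  shows "cmod (dirichlet_kernel N x) \<le> 1 / (2 * \<eta>)"
proof -
  have gap: "4 * \<bar>x\<bar> \<le> cmod (e x - 1)"
    using assms(3) by (rule norm_e_minus_1_ge)
  then have "e x \<noteq> 1"
    using assms(1,2) by auto
  then have "cmod (dirichlet_kernel N x) = cmod (e x ^ N - 1) / cmod (e x - 1)"
    unfolding dirichlet_kernel_def by (simp add: e_of_nat_mult geometric_sum norm_divide)
  also have "\<dots> \<le> 2 / (4 * \<eta>)"
    using norm_triangle_ineq4[of "e x ^ N" 1] gap assms(1,2) by (intro frac_le) (auto simp: norm_power)
  finally show ?thesis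
    by simp
qed

section \<open>Finite Fourier analysis modulo \<open>q\<close>\<close>

lemma sum_interval_shift:
  fixes c :: int
  shows "(\<Sum>b\<in>{c..<c + int q}. f b) = (\<Sum>j<q. f (c + int j))"
proof -
  have "{c..<c + int q} = (\<lambda>j. c + int j) ` {..<q}"
    by (auto simp: image_iff intro!: bexI[where x = "nat (_ - c)"])
  moreover have "inj_on (\<lambda>j. c + int j) {..<q}"
    by (auto simp: inj_on_def)
  ultimately show ?thesis
    by (simp add: sum.reindex)
qed

lemma sum_e_window:
  fixes m c :: int
  assumes "0 < q"
  shows "(\<Sum>b\<in>{c..<c + int q}. e (of_int (m * b) / real q))
    = (if int q dvd m then of_nat q else 0)"
proof -
  define z where "z = e (of_int m / real q)"
  have "(\<Sum>b\<in>{c..<c + int q}. e (of_int (m * b) / real q))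
      = e (of_int (m * c) / real q) * (\<Sum>j<q. z ^ j)"
    unfolding sum_interval_shift sum_distrib_left z_def
    by (simp add: algebra_simps add_divide_distrib e_add flip: e_of_nat_mult)
  also have "\<dots> = (if int q dvd m then of_nat q else 0)"
  proof (cases "int q dvd m")
    case True
    then obtain n where "m = int q * n"
      by blast
    then have int: "of_int m / real q = of_int n" "of_int (m * c) / real q = of_int (n * c)"
      using assms by simp_all
    have "z = 1" "e (of_int (m * c) / real q) = 1"
      by (simp_all only: z_def int e_of_int)
    then show ?thesis
      using True by simp
  next
    case False
    have "z \<noteq> 1"
    proof
      assume "z = 1"
      then obtain n where "of_int m / real q = of_int n"
        unfolding z_def e_eq_1_iff by (auto elim: Ints_cases)
      then have "real_of_int m = real_of_int (int q * n)"
        using assms by (simp add: field_simps)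
      then show False
        using False by (simp only: of_int_eq_iff) simp
    qed
    moreover have "z ^ q = 1"
      using assms by (simp add: z_def flip: e_of_nat_mult) (simp add: e_of_int)
    ultimately show ?thesis
      using False by (simp add: geometric_sum)
  qed
  finally show ?thesis .
qed

lemma fT_inversion:
  fixes W :: "int set" and c :: int
  assumes q: "0 < q" and W: "W \<subseteq> {0..<int q}"
  shows "of_nat q * fT W u = (\<Sum>b\<in>{c..<c + int q}.
           fT W (of_int b / real q) * dirichlet_kernel q (u - of_int b / real q))"
proof -
  define B where "B = {c..<c + int q}"
  have delta: "(\<Sum>n<q. e (real n * u) * (if int q dvd w - int n then of_nat q else 0))
      = of_nat q * e (of_int w * u)" if "w \<in> W" for w
  proof -
    have w: "0 \<le> w" "w < int q"
      using \<open>w \<in> W\<close> W by auto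
    then have "int q dvd w - int n \<longleftrightarrow> n = nat w" if "n < q" for n
      using that cong_less_imp_eq_int[of w "int q" "int n"] by (auto simp: cong_iff_dvd_diff)
    then have "(\<Sum>n<q. e (real n * u) * (if int q dvd w - int n then of_nat q else 0))
        = (\<Sum>n<q. if n = nat w then of_nat q * e (real n * u) else 0)"
      by (intro sum.cong) auto
    then show ?thesis
      using w by (simp add: nat_less_iff)
  qed
  have "(\<Sum>b\<in>B. fT W (of_int b / real q) * dirichlet_kernel q (u - of_int b / real q))
      = (\<Sum>b\<in>B. \<Sum>w\<in>W. \<Sum>n<q. e (real n * u) * e (of_int ((w - int n) * b) / real q))"
    unfolding fT_def dirichlet_kernel_def sum_product
  proof (intro sum.cong refl)
    fix b w n
    have "of_int w * (of_int b / real q) + real n * (u - of_int b / real q)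
        = real n * u + of_int ((w - int n) * b) / real q"
      using q by (simp add: field_simps)
    then show "e (of_int w * (of_int b / real q)) * e (real n * (u - of_int b / real q))
        = e (real n * u) * e (of_int ((w - int n) * b) / real q)"
      by (metis e_add)
  qed
  also have "\<dots> = (\<Sum>w\<in>W. \<Sum>n<q. e (real n * u) * (\<Sum>b\<in>B. e (of_int ((w - int n) * b) / real q)))"
    by (simp add: sum.swap[of _ B] sum_distrib_left)
  also have "\<dots> = (\<Sum>w\<in>W. \<Sum>n<q. e (real n * u) * (if int q dvd w - int n then of_nat q else 0))"
    unfolding B_def by (simp only: sum_e_window[OF q])
  also have "\<dots> = of_nat q * fT W u"
    by (simp add: delta fT_def sum_distrib_left)
  finally show ?thesis
    unfolding B_def ..
qed

lemma sum_norm_fT_squared: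
  fixes W :: "int set" and c :: int
  assumes q: "0 < q" and W: "W \<subseteq> {0..<int q}"
  shows "(\<Sum>b\<in>{c..<c + int q}. (cmod (fT W (of_int b / real q)))\<^sup>2) = real q * real (card W)"
proof -
  define B where "B = {c..<c + int q}"
  have "complex_of_real (\<Sum>b\<in>B. (cmod (fT W (of_int b / real q)))\<^sup>2)
      = (\<Sum>b\<in>B. fT W (of_int b / real q) * cnj (fT W (of_int b / real q)))"
    by (simp only: of_real_sum complex_norm_square)
  also have "\<dots> = (\<Sum>b\<in>B. \<Sum>w\<in>W. \<Sum>w'\<in>W. e (of_int ((w - w') * b) / real q))"
    unfolding fT_def cnj_sum sum_product
  proof (intro sum.cong refl)
    fix b w w'
    have "of_int w * (of_int b / real q) + - (of_int w' * (of_int b / real q))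
        = of_int ((w - w') * b) / real q"
      using q by (simp add: field_simps)
    then show "e (of_int w * (of_int b / real q)) * cnj (e (of_int w' * (of_int b / real q)))
        = e (of_int ((w - w') * b) / real q)"
      by (metis cnj_e e_add)
  qed
  also have "\<dots> = (\<Sum>w\<in>W. \<Sum>w'\<in>W. \<Sum>b\<in>B. e (of_int ((w - w') * b) / real q))"
    by (simp add: sum.swap[of _ B])
  also have "\<dots> = (\<Sum>w\<in>W. \<Sum>w'\<in>W. if w' = w then of_nat q else 0)"
  proof (intro sum.cong refl)
    fix w w' assume "w \<in> W" "w' \<in> W"
    then have "0 \<le> w" "w < int q" "0 \<le> w'" "w' < int q"
      using W by auto
    then have "int q dvd w - w' \<longleftrightarrow> w' = w"
      using cong_less_imp_eq_int[of w "int q" w'] by (auto simp: cong_iff_dvd_diff)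
    then show "(\<Sum>b\<in>B. e (of_int ((w - w') * b) / real q)) = (if w' = w then of_nat q else 0)"
      unfolding B_def by (simp only: sum_e_window[OF q])
  qed
  also have "\<dots> = complex_of_real (real q * real (card W))"
    using finite_subset[OF W] by simp
  finally show ?thesis
    unfolding B_def of_real_eq_iff .
qed

lemma norm_fT_le_sum_coefficients:
  fixes W :: "int set" and c :: int
  assumes "0 < q" "W \<subseteq> {0..<int q}"
  shows "real q * cmod (fT W u) \<le> (\<Sum>b\<in>{c..<c + int q}.
           cmod (fT W (of_int b / real q)) * cmod (dirichlet_kernel q (u - of_int b / real q)))"
proof -
  have "real q * cmod (fT W u) = cmod (\<Sum>b\<in>{c..<c + int q}.
           fT W (of_int b / real q) * dirichlet_kernel q (u - of_int b / real q))"
    unfolding fT_inversion[OF assms, symmetric] by (simp add: norm_mult)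
  also have "\<dots> \<le> (\<Sum>b\<in>{c..<c + int q}.
           cmod (fT W (of_int b / real q)) * cmod (dirichlet_kernel q (u - of_int b / real q)))"
    by (rule order.trans[OF norm_sum]) (simp add: norm_mult)
  finally show ?thesis .
qed

section \<open>Bounding \<open>fT W u\<close> by its Fourier coefficients\<close>

lemma sum_inverse_squares_le:
  fixes m n :: int
  assumes "1 \<le> m" "m \<le> n"
  shows "(\<Sum>j\<in>{m<..n}. 1 / (real_of_int j)\<^sup>2) \<le> 1 / m - 1 / n"
  using assms(2)
proof (induction n rule: int_ge_induct)
  case base
  then show ?case
    by simp
next
  case (step n)
  have n: "0 < real_of_int n"
    using assms(1) step.hyps by simp
  have "1 / (real_of_int n + 1)\<^sup>2 \<le> 1 / (real_of_int n * (real_of_int n + 1))"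
    using n by (intro divide_left_mono) (auto simp: power2_eq_square)
  also have "\<dots> = 1 / n - 1 / (n + 1)"
    using n by (simp add: field_simps)
  finally have "1 / (real_of_int (n + 1))\<^sup>2 \<le> 1 / n - 1 / (n + 1)"
    by simp
  moreover have "{m<..n + 1} = insert (n + 1) {m<..n}"
    using step.hyps by auto
  ultimately show ?case
    using step.IH by simp
qed

lemma sum_inverse_squares_greater_le:
  fixes J :: "int set" and M :: nat
  assumes "finite J" "1 \<le> M"
  shows "(\<Sum>j\<in>{j\<in>J. int M < j}. 1 / (real_of_int j)\<^sup>2) \<le> 1 / M"
proof -
  define K where "K = Max (insert (int M) J)"
  have K: "int M \<le> K" "\<And>j. j \<in> J \<Longrightarrow> j \<le> K"
    using assms(1) by (simp_all add: K_def)
  have "(\<Sum>j\<in>{j\<in>J. int M < j}. 1 / (real_of_int j)\<^sup>2) \<le> (\<Sum>j\<in>{int M<..K}. 1 / (real_of_int j)\<^sup>2)"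
    using K by (intro sum_mono2) auto
  also have "\<dots> \<le> 1 / M - 1 / K"
    using assms(2) K(1) sum_inverse_squares_le[of "int M" K] by simp
  also have "\<dots> \<le> 1 / M"
    using assms(2) K(1) by simp
  finally show ?thesis .
qed

lemma sum_inverse_squares_abs_greater_le:
  fixes J :: "int set" and M :: nat
  assumes "finite J" "1 \<le> M"
  shows "(\<Sum>j\<in>{j\<in>J. int M < \<bar>j\<bar>}. 1 / (real_of_int j)\<^sup>2) \<le> 2 / M"
proof -
  define f :: "int \<Rightarrow> real" where "f j = 1 / (real_of_int j)\<^sup>2" for j
  have "{j\<in>J. int M < \<bar>j\<bar>} = {j\<in>J. int M < j} \<union> {j\<in>J. int M < - j}"
    by auto
  then have "sum f {j\<in>J. int M < \<bar>j\<bar>} = sum f {j\<in>J. int M < j} + sum f {j\<in>J. int M < - j}"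
    using assms(1) by (auto intro: sum.union_disjoint)
  also have "sum f {j\<in>J. int M < - j} = sum f {j\<in>uminus ` J. int M < j}"
    by (rule sum.reindex_bij_witness[where i = uminus and j = uminus]) (auto simp: f_def)
  also have "sum f {j\<in>J. int M < j} + sum f {j\<in>uminus ` J. int M < j} \<le> 1 / M + 1 / M"
    unfolding f_def using assms by (intro add_mono sum_inverse_squares_greater_le) auto
  finally show ?thesis
    by (simp add: f_def)
qed

lemma sum_near_far_le:
  fixes B :: "int set" and b\<^sub>0 :: int and M :: nat and X Y :: real
  assumes "finite B" "1 \<le> M" "0 \<le> X" "0 \<le> Y"
  shows "(\<Sum>b\<in>B. if int M < \<bar>b - b\<^sub>0\<bar> then Y / (real_of_int (b - b\<^sub>0))\<^sup>2 else X)
    \<le> (2 * M + 1) * X + 2 * Y / M"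
proof -
  define Far where "Far = {b. int M < \<bar>b - b\<^sub>0\<bar>}"
  have "card (B \<inter> - Far) \<le> card {b\<^sub>0 - int M..b\<^sub>0 + int M}"
    unfolding Far_def by (intro card_mono) auto
  then have near: "card (B \<inter> - Far) * X \<le> (2 * M + 1) * X"
    using assms(3) by (intro mult_right_mono) auto
  have "(\<Sum>b\<in>B \<inter> Far. 1 / (real_of_int (b - b\<^sub>0))\<^sup>2)
      = (\<Sum>j\<in>{j\<in>(\<lambda>b. b - b\<^sub>0) ` B. int M < \<bar>j\<bar>}. 1 / (real_of_int j)\<^sup>2)"
    unfolding Far_def
    by (rule sum.reindex_bij_witness[where i = "\<lambda>j. j + b\<^sub>0" and j = "\<lambda>b. b - b\<^sub>0"]) auto
  also have "\<dots> \<le> 2 / M"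
    using assms by (intro sum_inverse_squares_abs_greater_le) auto
  finally have "Y * (\<Sum>b\<in>B \<inter> Far. 1 / (real_of_int (b - b\<^sub>0))\<^sup>2) \<le> Y * (2 / M)"
    using assms(4) by (rule mult_left_mono)
  then have far: "(\<Sum>b\<in>B \<inter> Far. Y / (real_of_int (b - b\<^sub>0))\<^sup>2) \<le> 2 * Y / M"
    by (simp add: sum_distrib_left mult.commute)
  have "(\<Sum>b\<in>B. if b \<in> Far then Y / (real_of_int (b - b\<^sub>0))\<^sup>2 else X)
      = (\<Sum>b\<in>B \<inter> Far. Y / (real_of_int (b - b\<^sub>0))\<^sup>2) + card (B \<inter> - Far) * X"
    using assms(1) by (simp add: sum.If_cases)
  then show ?thesis
    using near far unfolding Far_def by simp
qed

lemma mult_le_near_far: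
  fixes g d X P Q t j :: real
  assumes "0 \<le> g" "0 \<le> d" "0 < X" "0 \<le> P" "0 < t" "d \<le> Q"
    and large: "X < g \<Longrightarrow> d \<le> P"
    and far: "F \<Longrightarrow> d \<le> Q / \<bar>j\<bar>"
  shows "g * d \<le> g\<^sup>2 * (P / X + t / 2) + (if F then Q\<^sup>2 / (2 * t) / j\<^sup>2 else X * Q)"
proof -
  have nonneg: "0 \<le> g\<^sup>2 * (P / X)" "0 \<le> g\<^sup>2 * (t / 2)" "0 \<le> (if F then Q\<^sup>2 / (2 * t) / j\<^sup>2 else X * Q)"
    using assms by auto
  consider "X < g" | "g \<le> X" "F" | "g \<le> X" "\<not> F"
    by linarith
  then show ?thesis
  proof cases
    case 1
    then have "g * d * X \<le> g * P * g"
      using assms large by (intro mult_mono) auto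
    then have "g * d \<le> g\<^sup>2 * (P / X)"
      using assms(3) by (simp add: field_simps power2_eq_square)
    then show ?thesis
      unfolding distrib_left using nonneg by linarith
  next
    case 2
    \<comment> \<open>AM-GM: \<open>g d \<le> g\<^sup>2 t / 2 + d\<^sup>2 / (2 t)\<close>\<close>
    have "0 \<le> (t * g - d)\<^sup>2 / (2 * t)"
      using assms by simp
    then have "g * d \<le> g\<^sup>2 * (t / 2) + d\<^sup>2 / (2 * t)"
      using assms by (simp add: field_simps power2_eq_square)
    moreover have "d\<^sup>2 \<le> (Q / \<bar>j\<bar>)\<^sup>2"
      using assms far 2 by (intro power_mono) auto
    then have "d\<^sup>2 / (2 * t) \<le> (Q / \<bar>j\<bar>)\<^sup>2 / (2 * t)"
      using assms by (intro divide_right_mono) auto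
    moreover have "(Q / \<bar>j\<bar>)\<^sup>2 / (2 * t) = Q\<^sup>2 / (2 * t) / j\<^sup>2"
      by (simp add: power_divide)
    ultimately show ?thesis
      unfolding distrib_left using nonneg 2 by simp
  next
    case 3
    then have "g * d \<le> X * Q"
      using assms by (intro mult_mono) auto
    then show ?thesis
      unfolding distrib_left using nonneg 3 by simp
  qed
qed

lemma window_distance:
  fixes u Q :: real and b b\<^sub>0 c :: int
  assumes Q: "Q = 2 * of_int c + 1" and b\<^sub>0: "\<bar>Q * u - of_int b\<^sub>0\<bar> \<le> 1 / 2" and b: "\<bar>b - b\<^sub>0\<bar> \<le> c"
  shows "\<bar>u - of_int b / Q\<bar> \<le> 1 / 2" "\<bar>of_int (b - b\<^sub>0)\<bar> / (2 * Q) \<le> \<bar>u - of_int b / Q\<bar>"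
proof -
  define \<theta> where "\<theta> = Q * u - of_int b\<^sub>0"
  define j where "j = real_of_int (b - b\<^sub>0)"
  have "\<bar>j\<bar> \<le> of_int c"
    using b unfolding j_def by (metis of_int_abs of_int_le_iff)
  then have Q_pos: "0 < Q"
    using Q by linarith
  have eq: "\<bar>u - of_int b / Q\<bar> = \<bar>\<theta> - j\<bar> / Q"
    using Q_pos by (simp add: \<theta>_def j_def field_simps abs_divide)
  have "\<bar>\<theta> - j\<bar> \<le> Q / 2"
    using b\<^sub>0 \<open>\<bar>j\<bar> \<le> of_int c\<close> Q unfolding \<theta>_def by linarith
  then show "\<bar>u - of_int b / Q\<bar> \<le> 1 / 2"
    unfolding eq using Q_pos by (simp add: pos_divide_le_eq)
  have "\<bar>j\<bar> / 2 \<le> \<bar>\<theta> - j\<bar>"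
  proof (cases "b = b\<^sub>0")
    case False
    then have "1 \<le> \<bar>j\<bar>"
      unfolding j_def by (metis of_int_1_le_iff of_int_abs right_minus_eq zero_less_abs_iff int_one_le_iff_zero_less)
    then show ?thesis
      using b\<^sub>0 unfolding \<theta>_def by linarith
  qed (simp add: j_def)
  then show "\<bar>of_int (b - b\<^sub>0)\<bar> / (2 * Q) \<le> \<bar>u - of_int b / Q\<bar>"
    unfolding eq j_def[symmetric] using Q_pos by (simp add: field_simps)
qed

lemma norm_fT_le_if_large_coefficients_far:
  fixes q M :: nat and W :: "int set" and u X \<eta> t :: real
  assumes "odd q" and W: "W \<subseteq> {0..<int q}" and "0 < X" "0 < \<eta>" "0 < t" "1 \<le> M"
    and far: "\<And>b. X < cmod (fT W (of_int b / real q)) \<Longrightarrow> \<eta> \<le> \<bar>u - of_int b / real q\<bar>"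
  shows "cmod (fT W u) \<le> card W * (1 / (2 * \<eta> * X) + t / 2) + (2 * M + 1) * X + q / (t * M)"
proof -
  have q: "0 < q"
    using \<open>odd q\<close> by (rule odd_pos)
  define c where "c = (int q - 1) div 2"
  have qc: "int q = 2 * c + 1"
    using \<open>odd q\<close> by (auto simp: c_def elim!: oddE)
  have Q: "real q = 2 * of_int c + 1"
    using arg_cong[OF qc, of real_of_int] by simp
  define b\<^sub>0 where "b\<^sub>0 = round (real q * u)"
  define B where "B = {b\<^sub>0 - c..<b\<^sub>0 - c + int q}"
  define G where "G b = cmod (fT W (of_int b / real q))" for b
  define D where "D b = cmod (dirichlet_kernel q (u - of_int b / real q))" for b
  define Y where "Y = (real q)\<^sup>2 / (2 * t)"
  have b\<^sub>0: "\<bar>real q * u - of_int b\<^sub>0\<bar> \<le> 1 / 2"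
    using of_int_round_abs_le[of "real q * u"] by (simp add: b\<^sub>0_def abs_minus_commute)
  have "real q * cmod (fT W u) \<le> (\<Sum>b\<in>B. G b * D b)"
    unfolding B_def G_def D_def by (rule norm_fT_le_sum_coefficients[OF q W])
  also have "\<dots> \<le> (\<Sum>b\<in>B. (G b)\<^sup>2 * (1 / (2 * \<eta>) / X + t / 2)
      + (if int M < \<bar>b - b\<^sub>0\<bar> then Y / (real_of_int (b - b\<^sub>0))\<^sup>2 else X * real q))"
  proof (intro sum_mono)
    fix b assume "b \<in> B"
    then have "\<bar>b - b\<^sub>0\<bar> \<le> c"
      using qc unfolding B_def by auto
    note x = window_distance[OF Q b\<^sub>0 this]
    show "G b * D b \<le> (G b)\<^sup>2 * (1 / (2 * \<eta>) / X + t / 2)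
      + (if int M < \<bar>b - b\<^sub>0\<bar> then Y / (real_of_int (b - b\<^sub>0))\<^sup>2 else X * real q)"
      unfolding Y_def
    proof (rule mult_le_near_far)
      show "D b \<le> real q"
        unfolding D_def by (rule norm_dirichlet_kernel_le)
      show "D b \<le> 1 / (2 * \<eta>)" if "X < G b"
        unfolding D_def using \<open>0 < \<eta>\<close> far[OF that[unfolded G_def]] x(1)
        by (rule norm_dirichlet_kernel_le_inverse)
      show "D b \<le> real q / \<bar>real_of_int (b - b\<^sub>0)\<bar>" if "int M < \<bar>b - b\<^sub>0\<bar>"
        unfolding D_def using that q x
          norm_dirichlet_kernel_le_inverse[of "\<bar>real_of_int (b - b\<^sub>0)\<bar> / (2 * real q)"]
        by simp
    qed (use assms in \<open>auto simp: G_def D_def\<close>)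
  qed
  also have "\<dots> \<le> real q * card W * (1 / (2 * \<eta> * X) + t / 2) + ((2 * M + 1) * (X * real q) + 2 * Y / M)"
    unfolding sum.distrib sum_distrib_right[symmetric] G_def B_def sum_norm_fT_squared[OF q W]
    using assms by (intro add_mono sum_near_far_le) (auto simp: Y_def)
  also have "\<dots> = real q * (card W * (1 / (2 * \<eta> * X) + t / 2) + (2 * M + 1) * X + q / (t * M))"
    using \<open>0 < t\<close> by (simp add: Y_def field_simps power2_eq_square)
  finally show ?thesis
    using q by simp
qed

section \<open>The sets \<open>W\<close>\<close>

lemma inv_modq_cong:
  fixes m a :: int
  assumes "0 < m" "coprime a m"
  shows "[a * inv_modq m a = 1] (mod m)"
  using assms unfolding inv_modq_def coprime_iff_invertible'_int[OF assms(1)]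
  by (metis (mono_tags, lifting) someI_ex)

lemma coprime_inv_modq:
  fixes m a :: int
  assumes "0 < m" "coprime a m"
  shows "coprime (inv_modq m a) m"
  using inv_modq_cong[OF assms] unfolding coprime_iff_invertible_int by (metis mult.commute)

lemma coprime_int_prime_less:
  fixes q :: nat and x :: int
  assumes "prime q" "0 < x" "x < int q"
  shows "coprime x q"
proof -
  have "\<not> int q dvd x"
    using assms(2,3) by (auto dest: zdvd_imp_le)
  then show ?thesis
    using assms(1) prime_imp_coprime[of "int q" x] by (simp add: coprime_commute)
qed

lemma inj_on_affine_mod:
  fixes m g k :: int
  assumes "S \<subseteq> {0..<m}" "coprime g m"
  shows "inj_on (\<lambda>s. (g * s + k) mod m) S"
proof
  fix s s' assume "s \<in> S" "s' \<in> S" "(g * s + k) mod m = (g * s' + k) mod m"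
  then have "[s = s'] (mod m)" "0 \<le> s" "s < m" "0 \<le> s'" "s' < m"
    using assms by (auto simp: cong_mult_lcancel cong_add_rcancel simp flip: cong_def)
  then show "s = s'"
    by (simp add: cong_less_imp_eq_int)
qed

lemma exists_cong_abs_le_half:
  fixes m x :: int
  assumes "0 < m"
  shows "\<exists>a. [a = x] (mod m) \<and> 2 * \<bar>a\<bar> \<le> m"
proof -
  define d where "d = m div 2"
  define r where "r = (x + d) mod m"
  have "[r - d = x + d - d] (mod m)"
    unfolding r_def by (intro cong_diff) (auto simp: cong_def)
  moreover have "0 \<le> r" "r \<le> m - 1"
    using assms by (simp_all add: r_def)
  moreover have "0 \<le> m - 2 * d" "m - 2 * d \<le> 1"
    unfolding d_def by presburger+
  ultimately have "[r - d = x] (mod m)" "2 * (r - d) \<le> m" "- (2 * (r - d)) \<le> m"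
    by simp_all
  then show ?thesis
    by (auto simp: abs_if)
qed

lemma exists_cong_mult_abs_le_half:
  fixes m g b :: int
  assumes "0 < m" "coprime g m"
  shows "\<exists>a. [b = g * a] (mod m) \<and> 2 * \<bar>a\<bar> \<le> m"
proof -
  obtain a where a: "[a = inv_modq m g * b] (mod m)" "2 * \<bar>a\<bar> \<le> m"
    using exists_cong_abs_le_half[OF assms(1)] by blast
  have "[g * a = g * (inv_modq m g * b)] (mod m)"
    using a(1) by (rule cong_scalar_left)
  also have "g * (inv_modq m g * b) = g * inv_modq m g * b"
    by (simp add: ac_simps)
  also have "[\<dots> = 1 * b] (mod m)"
    using inv_modq_cong[OF assms] by (rule cong_scalar_right)
  finally show ?thesis
    using a(2) by (auto intro: cong_sym)
qed

lemma card_W: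
  fixes q :: nat and S :: "int set" and h k v :: int
  assumes "0 < q" "S \<subseteq> {0..<int q}" "coprime h q" "coprime (4 * v) q"
  shows "card (W (int q) S h k v) = card S"
  unfolding W_def using assms coprime_inv_modq[of "int q" "4 * v"]
  by (intro card_image inj_on_affine_mod) auto

lemma fT_affine_mod_image:
  fixes g k b :: int
  assumes q: "0 < q" and inj: "inj_on (\<lambda>s. (g * s + k) mod int q) S"
  shows "fT ((\<lambda>s. (g * s + k) mod int q) ` S) (of_int b / real q)
    = e (of_int (k * b) / real q) * (\<Sum>s\<in>S. e (of_int (g * s * b) / real q))"
proof -
  have "e (of_int ((g * s + k) mod int q) * (of_int b / real q))
      = e (of_int (k * b) / real q) * e (of_int (g * s * b) / real q)" for s
  proof -
    have "[(g * s + k) mod int q * b = (g * s + k) * b] (mod int q)"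
      by (intro cong_scalar_right) simp
    also have "(g * s + k) * b = k * b + g * s * b"
      by (simp add: algebra_simps)
    finally have "e (of_int ((g * s + k) mod int q * b) / real q) = e (of_int (k * b + g * s * b) / real q)"
      by (rule e_cong[OF q])
    then show ?thesis
      by (simp add: add_divide_distrib e_add)
  qed
  then show ?thesis
    unfolding fT_def sum.reindex[OF inj] sum_distrib_left by simp
qed

lemma norm_fT_W_eq:
  fixes q :: nat and S :: "int set" and h k v a b :: int
  assumes q: "0 < q" and S: "S \<subseteq> {0..<int q}" and "coprime h q" "coprime (4 * v) q"
    and ab: "[b = 4 * v * a] (mod int q)"
  shows "cmod (fT (W (int q) S h k v) (of_int b / real q))
    = cmod (fT ((\<lambda>s. (h * s) mod int q) ` S) (of_int a / real q))"
proof -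
  define i where "i = inv_modq (int q) (4 * v)"
  have "[4 * v * i = 1] (mod int q)" "coprime (i * h) q"
    using assms inv_modq_cong[of "int q" "4 * v"] coprime_inv_modq[of "int q" "4 * v"]
    by (simp_all add: i_def)
  have "[i * b = i * (4 * v * a)] (mod int q)"
    using ab by (rule cong_scalar_left)
  also have "i * (4 * v * a) = 4 * v * i * a"
    by (simp add: ac_simps)
  also have "[\<dots> = 1 * a] (mod int q)"
    using \<open>[4 * v * i = 1] (mod int q)\<close> by (rule cong_scalar_right)
  finally have "[i * h * s * b = h * s * a] (mod int q)" for s
    using cong_scalar_left[of "i * b" a "int q" "h * s"] by (simp add: ac_simps)
  then have "(\<Sum>s\<in>S. e (of_int (i * h * s * b) / real q)) = (\<Sum>s\<in>S. e (of_int (h * s * a) / real q))"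
    by (intro sum.cong refl e_cong[OF q])
  moreover have "fT (W (int q) S h k v) (of_int b / real q)
      = e (of_int (k * b) / real q) * (\<Sum>s\<in>S. e (of_int (i * h * s * b) / real q))"
    unfolding W_def i_def[symmetric]
    using S \<open>coprime (i * h) q\<close> by (intro fT_affine_mod_image[OF q] inj_on_affine_mod) auto
  moreover have "cmod (fT ((\<lambda>s. (h * s) mod int q) ` S) (of_int a / real q))
      = cmod (\<Sum>s\<in>S. e (of_int (h * s * a) / real q))"
    using fT_affine_mod_image[OF q, of h 0 S a] inj_on_affine_mod[of S "int q" h 0] S \<open>coprime h q\<close>
    by (simp add: norm_mult)
  ultimately show ?thesis
    by (simp add: norm_mult)
qed

lemma abs_sub_shift_ge:
  fixes u r \<eta> :: real and m :: int
  assumes "5 * \<eta> \<le> \<bar>u\<bar>" "\<bar>u\<bar> \<le> 1 / 2" "\<bar>r\<bar> \<le> 4 * \<eta>"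
  shows "\<eta> \<le> \<bar>u - r - of_int m\<bar>"
proof (cases "m = 0")
  case False
  then have "1 \<le> \<bar>real_of_int m\<bar>"
    by (metis of_int_1_le_iff of_int_abs zero_less_abs_iff int_one_le_iff_zero_less)
  then show ?thesis
    using assms by linarith
qed (use assms in simp)

lemma large_coefficients_of_W_far:
  fixes q :: nat and S :: "int set" and h k v b :: int and X \<delta> u :: real
  assumes q: "0 < q" and S: "S \<subseteq> {0..<int q}" and h: "coprime h q" and v: "coprime (4 * v) q" "1 \<le> v"
    and large: "\<And>a. \<bar>real_of_int a\<bar> \<le> real q / 2
      \<Longrightarrow> X < cmod (fT ((\<lambda>s. (h * s) mod int q) ` S) (real_of_int a / real q))
      \<Longrightarrow> \<bar>real_of_int a\<bar> < real q powr (1 - \<delta>)"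
    and u: "5 * real_of_int v * real q powr (- \<delta>) \<le> \<bar>u\<bar>" "\<bar>u\<bar> \<le> 1 / 2"
    and b: "X < cmod (fT (W (int q) S h k v) (of_int b / real q))"
  shows "real q powr (- \<delta>) \<le> \<bar>u - of_int b / real q\<bar>"
proof -
  obtain a where ab: "[b = 4 * v * a] (mod int q)" and a: "2 * \<bar>a\<bar> \<le> int q"
    using exists_cong_mult_abs_le_half[of "int q" "4 * v" b] q v by auto
  then obtain m where m: "b = 4 * v * a + int q * m"
    by (metis cong_iff_lin cong_sym)
  have "\<bar>real_of_int a\<bar> \<le> real q / 2"
    using a by linarith
  moreover have "X < cmod (fT ((\<lambda>s. (h * s) mod int q) ` S) (real_of_int a / real q))"
    using b norm_fT_W_eq[OF q S h v(1) ab] by simp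
  ultimately have "\<bar>real_of_int a\<bar> < real q powr (1 - \<delta>)"
    by (rule large)
  also have "\<dots> = real q * real q powr (- \<delta>)"
    using powr_add[of "real q" 1 "- \<delta>"] q by simp
  finally have "\<bar>real_of_int a\<bar> / real q \<le> real q powr (- \<delta>)"
    using q by (simp add: pos_divide_le_eq mult.commute)
  then have "4 * of_int v * (\<bar>real_of_int a\<bar> / real q) \<le> 4 * of_int v * real q powr (- \<delta>)"
    using v(2) by (intro mult_left_mono) auto
  then have "\<bar>of_int (4 * v * a) / real q\<bar> \<le> 4 * (of_int v * real q powr (- \<delta>))"
    using v(2) by (simp add: abs_mult)
  then have "of_int v * real q powr (- \<delta>) \<le> \<bar>u - of_int (4 * v * a) / real q - of_int m\<bar>"
    using u by (intro abs_sub_shift_ge) auto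
  moreover have "real q powr (- \<delta>) \<le> of_int v * real q powr (- \<delta>)"
    using mult_right_mono[of 1 "real_of_int v" "real q powr (- \<delta>)"] v(2) by simp
  moreover have "u - of_int b / real q = u - of_int (4 * v * a) / real q - of_int m"
    using q m by (simp add: field_simps)
  ultimately show ?thesis
    by simp
qed

section \<open>Choice of parameters\<close>

lemma error_terms_le:
  fixes N Q \<rho> t \<epsilon> \<delta> :: real and M :: nat
  assumes "0 < \<rho>" "\<rho> \<le> 1" "0 < t" "t \<le> 1 / 2" "\<epsilon> = \<rho> * t ^ 3" "0 < Q" "\<rho> * Q \<le> N"
    and Q: "Q powr \<delta> \<le> 2 * \<epsilon> * \<rho> * t * Q"
    and M: "1 / (\<rho> * t\<^sup>2) \<le> M" "M \<le> 1 / (\<rho> * t\<^sup>2) + 1"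
  shows "N * (1 / (2 * Q powr (- \<delta>) * (\<epsilon> * N)) + t / 2) + (2 * M + 1) * (\<epsilon> * N) + Q / (t * M)
    \<le> 21 / 4 * t * N"
proof -
  have "0 < N"
    using assms(1,6,7) mult_pos_pos[of \<rho> Q] by linarith
  have "0 < \<epsilon>" "0 < 1 / (\<rho> * t\<^sup>2)"
    using assms by auto
  have tN: "t * (\<rho> * Q) \<le> t * N"
    using assms by (intro mult_left_mono) auto
  have "N * (1 / (2 * Q powr (- \<delta>) * (\<epsilon> * N))) = Q powr \<delta> / (2 * \<epsilon>)"
    using \<open>0 < N\<close> \<open>0 < \<epsilon>\<close> assms(6) by (simp add: powr_minus_divide field_simps)
  also have "\<dots> \<le> t * (\<rho> * Q)"
    using Q \<open>0 < \<epsilon>\<close> by (simp add: pos_divide_le_eq mult_ac)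
  finally have T1: "N * (1 / (2 * Q powr (- \<delta>) * (\<epsilon> * N))) \<le> t * N"
    using tN by linarith
  have "(2 * M + 1) * \<epsilon> \<le> (2 * (1 / (\<rho> * t\<^sup>2) + 1) + 1) * \<epsilon>"
    using M \<open>0 < \<epsilon>\<close> by (intro mult_right_mono) auto
  also have "\<dots> = 2 * t + 3 * \<rho> * t ^ 3"
    using assms by (simp add: field_simps power2_eq_square power3_eq_cube)
  also have "\<dots> \<le> 11 / 4 * t"
  proof -
    have "\<rho> * t\<^sup>2 \<le> 1 * (1 / 2)\<^sup>2"
      using assms by (intro mult_mono power_mono) auto
    then show ?thesis
      using assms mult_right_mono[of "\<rho> * t\<^sup>2" "1 / 4" t] by (simp add: power2_eq_square power3_eq_cube)
  qed
  finally have "(2 * M + 1) * \<epsilon> * N \<le> 11 / 4 * t * N"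
    using \<open>0 < N\<close> by (intro mult_right_mono) auto
  then have T3: "(2 * M + 1) * (\<epsilon> * N) \<le> 11 / 4 * (t * N)"
    by (simp add: mult_ac)
  have "0 < real M"
    using M \<open>0 < 1 / (\<rho> * t\<^sup>2)\<close> by linarith
  then have "1 / M \<le> 1 / (1 / (\<rho> * t\<^sup>2))"
    using M \<open>0 < 1 / (\<rho> * t\<^sup>2)\<close> by (intro divide_left_mono mult_pos_pos) linarith+
  then have "Q / t * (1 / M) \<le> Q / t * (\<rho> * t\<^sup>2)"
    using assms by (intro mult_left_mono) auto
  moreover have "Q / t * (\<rho> * t\<^sup>2) = t * (\<rho> * Q)"
    using assms by (simp add: field_simps power2_eq_square)
  ultimately have T4: "Q / (t * M) \<le> t * N"
    using tN by simp
  have "N * (1 / (2 * Q powr (- \<delta>) * (\<epsilon> * N)) + t / 2)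
      = N * (1 / (2 * Q powr (- \<delta>) * (\<epsilon> * N))) + 1 / 2 * (t * N)"
    by (simp add: algebra_simps)
  moreover have "21 / 4 * t * N = 21 / 4 * (t * N)"
    by simp
  ultimately show ?thesis
    using T1 T3 T4 by linarith
qed

lemma eventually_powr_le_mult:
  fixes \<delta> c :: real
  assumes "\<delta> < 1" "0 < c"
  shows "\<forall>\<^sub>F q in sequentially. real q powr \<delta> \<le> c * real q"
proof -
  define q\<^sub>0 where "q\<^sub>0 = (1 / c) powr (1 / (1 - \<delta>))"
  have "real q powr \<delta> \<le> c * real q" if "q\<^sub>0 \<le> real q" for q :: nat
  proof -
    have "0 < q\<^sub>0"
      using assms by (simp add: q\<^sub>0_def)
    then have "0 < real q"
      using that by linarith
    have "1 / c = q\<^sub>0 powr (1 - \<delta>)"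
      using assms by (simp add: q\<^sub>0_def powr_powr)
    also have "\<dots> \<le> real q powr (1 - \<delta>)"
      using assms that \<open>0 < q\<^sub>0\<close> by (intro powr_mono2) auto
    finally have "real q powr \<delta> * (1 / c) \<le> real q powr \<delta> * real q powr (1 - \<delta>)"
      by (intro mult_left_mono) auto
    also have "\<dots> = real q"
      using \<open>0 < real q\<close> by (simp flip: powr_add)
    finally show ?thesis
      using assms by (simp add: field_simps)
  qed
  moreover have "\<forall>\<^sub>F q in sequentially. q\<^sub>0 \<le> real q"
    by (rule eventually_sequentiallyI[of "nat \<lceil>q\<^sub>0\<rceil>"]) linarith
  ultimately show ?thesis
    by (auto elim: eventually_mono)
qed

lemma powr_one_third_cube:
  fixes x :: real
  assumes "0 < x"
  shows "(x powr (1 / 3)) ^ 3 = x"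
  using assms by (simp add: powr_powr flip: powr_realpow)

lemma norm_fT_W_less:
  fixes q :: nat and S :: "int set" and h k v :: int and \<rho> t \<epsilon> \<delta> u :: real
  assumes q: "prime q" "3 \<le> q" and "0 < \<rho>" "\<rho> \<le> 1" "0 < t" "t \<le> 1 / 2" "\<epsilon> = \<rho> * t ^ 3"
    and "0 < \<delta>" "\<delta> < 1" "real q powr \<delta> \<le> 2 * \<epsilon> * \<rho> * t * real q"
    and S: "S \<subseteq> {0..<int q}" "\<rho> * real q \<le> card S"
    and h: "1 \<le> h" "h \<le> int q - 1"
    and large: "\<And>a. \<bar>real_of_int a\<bar> \<le> real q / 2
      \<Longrightarrow> \<epsilon> * card S < cmod (fT ((\<lambda>s. (h * s) mod int q) ` S) (real_of_int a / real q))
      \<Longrightarrow> \<bar>real_of_int a\<bar> < real q powr (1 - \<delta>)"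
    and v: "1 \<le> v" "real_of_int v < real q powr (\<delta> / 4)"
    and u: "5 * real_of_int v * real q powr (- \<delta>) \<le> \<bar>u\<bar>" "\<bar>u\<bar> \<le> 1 / 2"
  shows "cmod (fT (W (int q) S h k v) u) < 2 * pi * t * card S"
proof -
  have q_pos: "0 < q" and "odd q"
    using q prime_odd_nat[of q] by auto
  have "real_of_int v < real q"
    using v(2) q powr_less_mono[of "\<delta> / 4" 1 "real q"] \<open>\<delta> < 1\<close> by simp
  then have "coprime v q" "coprime h q"
    using q v(1) h by (auto intro: coprime_int_prime_less)
  then have "coprime (4 * v) q" "coprime h q"
    using \<open>odd q\<close> coprime_power_left_iff[of 2 2 "int q"] by simp_all
  have far: "real q powr (- \<delta>) \<le> \<bar>u - of_int b / real q\<bar>"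
    if "\<epsilon> * card S < cmod (fT (W (int q) S h k v) (of_int b / real q))" for b
    by (rule large_coefficients_of_W_far[where X = "\<epsilon> * card S",
          OF q_pos S(1) \<open>coprime h q\<close> \<open>coprime (4 * v) q\<close> v(1) large u that])
  define M where "M = nat \<lceil>1 / (\<rho> * t\<^sup>2)\<rceil>"
  have "0 < 1 / (\<rho> * t\<^sup>2)"
    using assms by simp
  then have M: "1 \<le> M" "1 / (\<rho> * t\<^sup>2) \<le> M" "M \<le> 1 / (\<rho> * t\<^sup>2) + 1"
    unfolding M_def by linarith+
  have "0 < real (card S)"
    using S(2) mult_pos_pos[of \<rho> "real q"] \<open>0 < \<rho>\<close> q_pos by linarith
  then have "0 < \<epsilon> * card S"
    using assms by simp
  then have "cmod (fT (W (int q) S h k v) u)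
      \<le> card (W (int q) S h k v) * (1 / (2 * real q powr (- \<delta>) * (\<epsilon> * card S)) + t / 2)
        + (2 * M + 1) * (\<epsilon> * card S) + q / (t * M)"
    using \<open>odd q\<close> q_pos S(1) far M(1) \<open>0 < t\<close>
    by (intro norm_fT_le_if_large_coefficients_far) (auto simp: W_def)
  also have "\<dots> \<le> 21 / 4 * t * card S"
    unfolding card_W[OF q_pos S(1) \<open>coprime h q\<close> \<open>coprime (4 * v) q\<close>]
    using assms M by (intro error_terms_le) auto
  also have "\<dots> < 2 * pi * t * card S"
  proof -
    have "21 / 4 < 2 * pi"
      using pi_gt3 by linarith
    then show ?thesis
      using mult_strict_right_mono[of "21 / 4" "2 * pi" "t * card S"] \<open>0 < real (card S)\<close> \<open>0 < t\<close>
      by (simp add: mult_ac)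
  qed
  finally show ?thesis .
qed

theorem proposition3:
  fixes \<rho>\<^sub>1 :: real
  assumes "0 < \<rho>\<^sub>1" "\<rho>\<^sub>1 < 1"
  shows "\<exists>\<epsilon>\<^sub>0::real. 0 < \<epsilon>\<^sub>0 \<and> \<epsilon>\<^sub>0 < 1 \<and>
    (\<forall>\<epsilon>::real. 0 < \<epsilon> \<and> \<epsilon> < \<epsilon>\<^sub>0 \<longrightarrow>
      (\<exists>q\<^sub>0::nat. \<forall>q::nat. prime q \<and> q \<ge> q\<^sub>0 \<longrightarrow>
        (\<forall>S::int set. \<forall>h::int. \<forall>k::int. \<forall>v::int.
          S \<subseteq> {0..<int q} \<and> real (card S) \<ge> \<rho>\<^sub>1 * real q \<and>
          1 \<le> h \<and> h \<le> int q - 1 \<and>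
          (\<forall>a::int. \<bar>real_of_int a\<bar> \<le> real q / 2 \<and>
              cmod (fT ((\<lambda>s. (h * s) mod int q) ` S) (real_of_int a / real q))
                > \<epsilon> * real (card S)
            \<longrightarrow> \<bar>real_of_int a\<bar> < real q powr (1 - \<rho>\<^sub>1 * \<epsilon>\<^sup>2)) \<and>
          1 \<le> v \<and> real_of_int v < real q powr (\<rho>\<^sub>1 * \<epsilon>\<^sup>2 / 4)
          \<longrightarrow> (\<forall>u::real. 5 * real_of_int v * real q powr (- (\<rho>\<^sub>1 * \<epsilon>\<^sup>2)) \<le> \<bar>u\<bar>
                  \<and> \<bar>u\<bar> \<le> 1 / 2 \<longrightarrow>
                cmod (fT (W (int q) S h k v) u)
                  < 2 * pi * (\<epsilon> / \<rho>\<^sub>1) powr (1 / 3) * real (card S)))))"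
  apply (intro exI[of _ "\<rho>\<^sub>1 / 8"] conjI allI impI)
  subgoal
    using assms by simp
  subgoal
    using assms by simp
  subgoal premises \<epsilon> for \<epsilon>
  proof -
    define t where "t = (\<epsilon> / \<rho>\<^sub>1) powr (1 / 3)"
    define \<delta> where "\<delta> = \<rho>\<^sub>1 * \<epsilon>\<^sup>2"
    have "0 < \<epsilon> / \<rho>\<^sub>1" "\<epsilon> / \<rho>\<^sub>1 < (1 / 2) ^ 3"
      using assms \<epsilon> by (simp_all add: field_simps)
    then have t: "0 < t" "t \<le> 1 / 2" "\<epsilon> = \<rho>\<^sub>1 * t ^ 3"
      using assms powr_one_third_cube[of "\<epsilon> / \<rho>\<^sub>1"] power_less_imp_less_base[of t 3 "1 / 2"]
      by (auto simp: t_def)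
    have \<delta>: "0 < \<delta>" "\<delta> < 1"
      using assms \<epsilon> mult_strict_mono[of \<rho>\<^sub>1 1 "\<epsilon>\<^sup>2" 1] by (auto simp: \<delta>_def power_less_one_iff)
    have "\<forall>\<^sub>F q in sequentially. 3 \<le> q \<and> real q powr \<delta> \<le> 2 * \<epsilon> * \<rho>\<^sub>1 * t * real q"
      using assms \<epsilon> t \<delta> by (intro eventually_conj eventually_ge_at_top eventually_powr_le_mult) auto
    then obtain q\<^sub>0 where large_q: "\<And>q. q\<^sub>0 \<le> q \<Longrightarrow> 3 \<le> q \<and> real q powr \<delta> \<le> 2 * \<epsilon> * \<rho>\<^sub>1 * t * real q"
      unfolding eventually_sequentially by blast
    show ?thesis
      unfolding t_def[symmetric] \<delta>_def[symmetric]
      using assms t \<delta> large_q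
      by (intro exI[of _ q\<^sub>0] allI impI norm_fT_W_less[where \<rho> = "\<rho>\<^sub>1" and \<epsilon> = \<epsilon> and \<delta> = \<delta>]) auto
  qed
  done

end
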